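(* Let $a,b\in\mathbb{R}$ with $|a|<1$, $b\ne0$, $\mu=1-a^2$, and let $M\in\mathbb{R}$ with $|M|\le1$. Let $1\le p,q\le\infty$ with $\frac1p+\frac1q=1$. Let $\lambda(x,\tau)$ be a sufficiently regular function decaying at spatial infinity. Then, for $t>\tau\ge0$, $$\|U[\partial_x\lambda(\tau)](\cdot,t,\tau)\|_{L^\infty}\le C\sum_{n=0}^{1}(1+t)^{-\frac12+\frac n2}(t-\tau)^{-\frac12+\frac1{2p}-\frac n2}\|\lambda(\cdot,\tau)\|_{L^q},$$ with $C$ independent of $t,\tau$.
   Context: $\chi_*(x)\equiv\frac{\sqrt{\mu}}{b}\frac{(e^{\frac{bM}{2\mu}}-1)e^{-\frac{x^2}{4\mu}}}{\sqrt\pi+(e^{\frac{bM}{2\mu}}-1)\int_{x/\sqrt{4\mu}}^\infty e^{-y^2}dy}$, $\chi(x,t)\equiv(1+t)^{-1/2}\chi_*\big(\frac{x-a(1+t)}{\sqrt{1+t}}\big)$, $\eta(x,t)\equiv\exp\big(\frac{b}{2\mu}\int_{-\infty}^x\chi(y,t)dy\big)$, $G_0(x,t)\equiv\frac{1}{\sqrt{4\pi\mu t}}e^{-\frac{(x-at)^2}{4\mu t}}$. For a function $h$ of $x$, $$U[h](x,t,\tau)\equiv\int_{\mathbb{R}}\partial_x\big(G_0(x-y,t-\tau)\eta(x,t)\big)\eta(y,\tau)^{-1}\Big(\int_{-\infty}^yh(\xi)d\xi\Big)dy,\quad x\in\mathbb{R},\ 0\le\tau<t,$$ and $U[\partial_x\lambda(\tau)]$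 means $U[h]$ with $h=\partial_x\lambda(\cdot,\tau)$. *)

theory Defs
  imports "HOL-Analysis.Analysis" "HOL-Probability.Essential_Supremum"
begin

definition chi_star :: "real \<Rightarrow> real \<Rightarrow> real \<Rightarrow> real \<Rightarrow> real" where
  "chi_star b mu M x =
     sqrt mu / b * ((exp (b * M / (2 * mu)) - 1) * exp (- (x\<^sup>2) / (4 * mu)))
     / (sqrt pi + (exp (b * M / (2 * mu)) - 1) * integral {x / sqrt (4 * mu)..} (\<lambda>y. exp (- (y\<^sup>2))))"

definition chi :: "real \<Rightarrow> real \<Rightarrow> real \<Rightarrow> real \<Rightarrow> real \<Rightarrow> real \<Rightarrow> real" where
  "chi a b mu M x t = (1 + t) powr (-1/2) * chi_star b mu M ((x - a * (1 + t)) / sqrt (1 + t))"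

definition eta :: "real \<Rightarrow> real \<Rightarrow> real \<Rightarrow> real \<Rightarrow> real \<Rightarrow> real \<Rightarrow> real" where
  "eta a b mu M x t = exp (b / (2 * mu) * integral {..x} (\<lambda>y. chi a b mu M y t))"

definition G0 :: "real \<Rightarrow> real \<Rightarrow> real \<Rightarrow> real \<Rightarrow> real" where
  "G0 a mu x t = 1 / sqrt (4 * pi * mu * t) * exp (- ((x - a * t)\<^sup>2) / (4 * mu * t))"

definition U_op :: "real \<Rightarrow> real \<Rightarrow> real \<Rightarrow> real \<Rightarrow> (real \<Rightarrow> real) \<Rightarrow> real \<Rightarrow> real \<Rightarrow> real \<Rightarrow> real" where
  "U_op a b mu M h x t \<tau> =
     (\<integral>y. deriv (\<lambda>x'. G0 a mu (x' - y) (t - \<tau>) * eta a b mu M x' t) x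
            * inverse (eta a b mu M y \<tau>) * integral {..y} h \<partial>lborel)"

definition memLq :: "ereal \<Rightarrow> (real \<Rightarrow> real) \<Rightarrow> bool" where
  "memLq q f \<longleftrightarrow> f \<in> borel_measurable lborel \<and>
     (if q = \<infinity> then esssup lborel (\<lambda>x. ereal \<bar>f x\<bar>) < \<infinity>
      else integrable lborel (\<lambda>x. \<bar>f x\<bar> powr real_of_ereal q))"

definition Lq_norm :: "ereal \<Rightarrow> (real \<Rightarrow> real) \<Rightarrow> real" where
  "Lq_norm q f = (if q = \<infinity> then real_of_ereal (esssup lborel (\<lambda>x. ereal \<bar>f x\<bar>))
     else (\<integral>x. \<bar>f x\<bar> powr real_of_ereal q \<partial>lborel) powr (1 / real_of_ereal q))"

end

(*
  The weight eta has a closed form. With E = exp (b M / (2 mu)) and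
  D z = sqrt pi + (E - 1) * integral {z / sqrt (4 mu)..} (exp (- y^2)),
  chi_star is - (2 mu / b) times the logarithmic derivative of D, and D tends to E sqrt pi
  at minus infinity, so eta x t = E sqrt pi / D ((x - a (1 + t)) / sqrt (1 + t)).
  As D lies between sqrt pi * min 1 E and sqrt pi * max 1 E, eta lies between min 1 E and
  max 1 E, and its x-derivative is O((1 + t)^(-1/2)).

  Since lambda vanishes at minus infinity, the inner integral in U[d_x lambda] is lambda(y)
  itself. The x-derivative of G0 (x - y, t - tau) eta (x, t) is bounded by
  ((t - tau)^(-1) + (t - tau)^(-1/2) (1 + t)^(-1/2)) times a Gaussian in y of width
  ~ (t - tau)^(1/2), and Hoelder's inequality against that Gaussian, whose L^p norm is at most
  its L^1 norm to the power 1/p, contributes the factor (t - tau)^(1/(2p)).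
*)
theory Submission
  imports Defs "HOL-Probability.Distributions"
begin

lemma fundamental_theorem_of_calculus_at_bot:
  fixes f f' :: "real \<Rightarrow> real"
  assumes der: "\<And>w. w \<le> x \<Longrightarrow> (f has_real_derivative f' w) (at w)"
    and lim: "(f \<longlongrightarrow> L) at_bot"
  shows "(f' has_integral (f x - L)) {..x}"
proof -
  let ?g = "\<lambda>w. if w \<in> {..x} then f' w else 0"
  have ftc: "(f' has_integral (f c - f a)) {a..c}" if "a \<le> c" "c \<le> x" for a c
    using that by (intro fundamental_theorem_of_calculus)
      (auto intro!: has_real_derivative_iff_has_vector_derivative[THEN iffD1, THEN has_vector_derivative_at_within] der)
  have restrict: "(?g has_integral (if a \<le> min c x then f (min c x) - f a else 0)) {a..c}" for a c
  proof -
    have "{..x} \<inter> {a..c} = {a..min c x}" by auto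
    then show ?thesis
      unfolding has_integral_restrict_Int using ftc[of a "min c x"] by auto
  qed
  show ?thesis
  proof (subst has_integral_alt', intro conjI allI impI)
    fix a c :: real
    show "?g integrable_on cbox a c"
      using restrict by auto
  next
    fix e :: real assume "e > 0"
    with lim obtain Z where Z: "\<And>a. a \<le> Z \<Longrightarrow> dist (f a) L < e"
      unfolding tendsto_iff eventually_at_bot_linorder by blast
    define B where "B = max (\<bar>x\<bar> + 1) (\<bar>Z\<bar> + 1)"
    show "\<exists>B>0. \<forall>a c. ball 0 B \<subseteq> cbox a c \<longrightarrow> norm (integral (cbox a c) ?g - (f x - L)) < e"
    proof (intro exI[of _ B] conjI allI impI)
      fix a c :: real assume "ball 0 B \<subseteq> cbox a c"
      then have "box (- B) B \<subseteq> cbox a c"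
        by (simp add: ball_eq_greaterThanLessThan)
      then have "a \<le> - B" "B \<le> c"
        unfolding subset_box(3) by (auto simp: B_def)
      then have "integral (cbox a c) ?g = f x - f a" "dist (f a) L < e"
        using restrict[of a c] Z[of a] by (auto simp: B_def integral_unique)
      then show "norm (integral (cbox a c) ?g - (f x - L)) < e"
        by (simp add: dist_real_def abs_minus_commute)
    qed (simp add: B_def)
  qed
qed

lemma integral_atMost_deriv:
  fixes l :: "real \<Rightarrow> real"
  assumes "\<And>x. l differentiable (at x)" "(l \<longlongrightarrow> 0) at_bot"
  shows "integral {..y} (deriv l) = l y"
  using fundamental_theorem_of_calculus_at_bot[of y l "deriv l" 0] assms
  by (simp add: DERIV_deriv_iff_real_differentiable integral_unique)

lemma filterlim_affine_at_bot:
  fixes c d :: real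
  assumes "0 < c"
  shows "filterlim (\<lambda>x. (x - d) / c) at_bot at_bot"
  unfolding filterlim_at_bot eventually_at_bot_linorder
proof
  fix Z :: real
  show "\<exists>N. \<forall>x\<le>N. (x - d) / c \<le> Z"
    using assms by (intro exI[of _ "Z * c + d"]) (auto simp: divide_le_eq)
qed

lemma powr_neg_half: "0 < u \<Longrightarrow> u powr - (1 / 2) = 1 / sqrt (u :: real)"
  by (simp add: powr_minus_divide powr_half_sqrt)

lemma decay_rate_sum:
  fixes s u r :: real
  assumes "0 < s" "0 < u"
  shows "(\<Sum>n\<in>{0::nat, 1}. u powr (- 1/2 + real n / 2) * s powr (- 1/2 + r / 2 - real n / 2))
    = s powr (r / 2) * (1 / (sqrt u * sqrt s) + 1 / s)"
proof -
  have "u powr - (1 / 2) * s powr (- (1 / 2) + r / 2) = s powr (r / 2) * (1 / (sqrt u * sqrt s))"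
    using assms by (simp add: powr_add powr_diff powr_half_sqrt powr_neg_half)
  moreover have "s powr (- (1 / 2) + r / 2 - 1 / 2) = s powr (r / 2) * (1 / s)"
    using assms by (simp add: powr_diff)
  ultimately show ?thesis
    using assms by (simp add: distrib_left)
qed

section \<open>Gaussian integrals\<close>

definition gaussian :: "real \<Rightarrow> real \<Rightarrow> real \<Rightarrow> real" where
  "gaussian c m y = exp (- ((y - m)\<^sup>2 / c))"

lemma gaussian_pos: "0 < gaussian c m y"
  by (simp add: gaussian_def)

lemma gaussian_le_one: "0 \<le> c \<Longrightarrow> gaussian c m y \<le> 1"
  by (simp add: gaussian_def)

lemma borel_measurable_gaussian[measurable]: "gaussian c m \<in> borel_measurable borel"
  unfolding gaussian_def by measurable

lemma gaussian_eq_normal_density: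
  "0 < c \<Longrightarrow> gaussian c m y = sqrt (pi * c) * normal_density m (sqrt (c / 2)) y"
  by (simp add: gaussian_def normal_density_def real_sqrt_mult real_sqrt_divide field_simps)

lemma integrable_gaussian:
  assumes "0 < c"
  shows "integrable lborel (gaussian c m)"
proof -
  have "gaussian c m = (\<lambda>y. sqrt (pi * c) * normal_density m (sqrt (c / 2)) y)"
    using assms by (simp add: fun_eq_iff gaussian_eq_normal_density)
  then show ?thesis
    using assms by simp
qed

lemma integral_gaussian: "0 < c \<Longrightarrow> (\<integral>y. gaussian c m y \<partial>lborel) = sqrt (pi * c)"
  by (simp add: gaussian_eq_normal_density)

lemma integrable_exp_neg_square: "integrable lborel (\<lambda>y::real. exp (- (y\<^sup>2)))"
  using integrable_gaussian[of 1 0] by (simp add: gaussian_def[abs_def])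

lemma integral_exp_neg_square: "(\<integral>(y::real). exp (- (y\<^sup>2)) \<partial>lborel) = sqrt pi"
  using integral_gaussian[of 1 0] by (simp add: gaussian_def)

lemma set_integrable_exp_neg_square: "set_integrable lborel A (\<lambda>y::real. exp (- (y\<^sup>2)))"
  if "A \<in> sets lborel"
  using that integrable_exp_neg_square unfolding set_integrable_def
  by (intro integrable_mult_indicator) auto

lemma continuous_on_exp_neg_square: "continuous_on S (\<lambda>y::real. exp (- (y\<^sup>2)))"
  by (intro continuous_intros)

definition gauss_tail :: "real \<Rightarrow> real" where
  "gauss_tail z = integral {z..} (\<lambda>y. exp (- (y\<^sup>2)))"

lemma gauss_tail_eq_set_integral: "gauss_tail z = (LINT y:{z..}|lborel. exp (- (y\<^sup>2)))"
  unfolding gauss_tail_def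
  by (rule set_borel_integral_eq_integral(2)[symmetric]) (simp add: set_integrable_exp_neg_square)

lemma gauss_tail_nonneg: "0 \<le> gauss_tail z"
  unfolding gauss_tail_eq_set_integral set_lebesgue_integral_def by simp

lemma gauss_tail_le_sqrt_pi: "gauss_tail z \<le> sqrt pi"
proof -
  have "gauss_tail z \<le> (\<integral>y. exp (- (y\<^sup>2)) \<partial>lborel)"
    unfolding gauss_tail_eq_set_integral set_lebesgue_integral_def
    using set_integrable_exp_neg_square[of "{z..}"] integrable_exp_neg_square
    by (intro integral_mono) (auto simp: set_integrable_def indicator_def)
  then show ?thesis
    unfolding integral_exp_neg_square .
qed

lemma gauss_tail_diff:
  assumes "z \<le> w"
  shows "gauss_tail z = integral {z..w} (\<lambda>y. exp (- (y\<^sup>2))) + gauss_tail w"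
proof -
  have "{z..} = {z..w} \<union> {w..}"
    using assms by auto
  moreover have "AE y in lborel. \<not> (y \<in> {z..w} \<and> y \<in> {w..})"
    using AE_lborel_singleton[of w] by eventually_elim auto
  ultimately show ?thesis
    by (simp add: gauss_tail_eq_set_integral set_integral_Un_AE set_integrable_exp_neg_square
        set_borel_integral_eq_integral(2))
qed

lemma gauss_tail_has_real_derivative: "(gauss_tail has_real_derivative - exp (- (z\<^sup>2))) (at z)"
proof -
  have "((\<lambda>w. integral {w..z + 1} (\<lambda>y. exp (- (y\<^sup>2)))) has_real_derivative - exp (- (z\<^sup>2)))
      (at z within {z - 1..z + 1})"
    by (rule integral_has_real_derivative'[OF continuous_on_exp_neg_square]) simp
  then have "((\<lambda>w. gauss_tail (z + 1) + integral {w..z + 1} (\<lambda>y. exp (- (y\<^sup>2))))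
      has_real_derivative - exp (- (z\<^sup>2))) (at z)"
    by (intro DERIV_add_const) (simp add: at_within_Icc_at)
  then show ?thesis
  proof (rule has_field_derivative_transform_within_open[where S = "{..<z + 1}"])
    fix w :: real assume "w \<in> {..<z + 1}"
    then show "gauss_tail (z + 1) + integral {w..z + 1} (\<lambda>y. exp (- (y\<^sup>2))) = gauss_tail w"
      using gauss_tail_diff[of w "z + 1"] by simp
  qed auto
qed

lemma gauss_tail_tendsto_at_bot: "(gauss_tail \<longlongrightarrow> sqrt pi) at_bot"
proof -
  have "((\<lambda>a. (LINT y:{a..0}|lborel. exp (- (y\<^sup>2))) + gauss_tail 0)
      \<longlongrightarrow> (LINT y:{..0}|lborel. exp (- (y\<^sup>2))) + gauss_tail 0) at_bot"
    by (intro tendsto_add tendsto_set_lebesgue_integral_at_bot tendsto_const)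
      (auto simp: set_integrable_exp_neg_square)
  moreover have "(LINT y:{..0}|lborel. exp (- (y\<^sup>2))) + gauss_tail 0 = sqrt pi"
  proof -
    have "AE y in lborel. \<not> (y \<in> {..0} \<and> y \<in> {0::real..})"
      using AE_lborel_singleton[of 0] by eventually_elim auto
    then have "(LINT y:{..0} \<union> {0..}|lborel. exp (- (y\<^sup>2)))
        = (LINT y:{..0}|lborel. exp (- (y\<^sup>2))) + gauss_tail 0"
      unfolding gauss_tail_eq_set_integral
      by (rule set_integral_Un_AE) (auto simp: set_integrable_exp_neg_square)
    moreover have "{..0} \<union> {0..} = (UNIV :: real set)"
      by auto
    ultimately show ?thesis
      using integral_exp_neg_square by (simp add: set_lebesgue_integral_def)
  qed
  moreover have "eventually (\<lambda>a. (LINT y:{a..0}|lborel. exp (- (y\<^sup>2))) + gauss_tail 0 = gauss_tail a) at_bot"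
    unfolding eventually_at_bot_linorder
  proof (intro exI allI impI)
    fix a :: real assume "a \<le> 0"
    then show "(LINT y:{a..0}|lborel. exp (- (y\<^sup>2))) + gauss_tail 0 = gauss_tail a"
      using gauss_tail_diff[of a 0]
      by (simp add: set_borel_integral_eq_integral(2) set_integrable_exp_neg_square)
  qed
  ultimately show ?thesis
    by (simp add: tendsto_cong)
qed

section \<open>The heat kernel\<close>

lemma abs_mult_exp_neg_square_le:
  fixes v A :: real
  assumes "0 < A"
  shows "\<bar>v\<bar> * exp (- (v\<^sup>2 / A)) \<le> sqrt A * exp (- (v\<^sup>2 / (2 * A)))"
proof -
  define w where "w = v\<^sup>2 / (2 * A)"
  have "2 * w \<le> exp (2 * w)"
    using exp_ge_add_one_self[of "2 * w"] by linarith
  then have "(\<bar>v\<bar> * exp (- w))\<^sup>2 \<le> A"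
    using assms
    by (simp add: w_def power_mult_distrib exp_minus field_simps flip: exp_of_nat_mult)
  then have "\<bar>v\<bar> * exp (- w) \<le> sqrt A"
    by (rule real_le_rsqrt)
  then have "\<bar>v\<bar> * exp (- w) * exp (- w) \<le> sqrt A * exp (- w)"
    by (rule mult_right_mono) simp
  moreover have "exp (- (v\<^sup>2 / A)) = exp (- w) * exp (- w)"
    using assms by (simp add: w_def flip: exp_add)
  ultimately show ?thesis
    by (simp add: w_def mult.assoc)
qed

lemma G0_has_real_derivative:
  assumes "0 < mu" "0 < s"
  shows "((\<lambda>w. G0 a mu w s) has_real_derivative - (w - a * s) / (2 * mu * s) * G0 a mu w s) (at w)"
proof -
  have deriv: "((\<lambda>w. 1 / sqrt (4 * pi * mu * s) * exp (- ((w - a * s)\<^sup>2) / (4 * mu * s))) has_real_derivative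
      1 / sqrt (4 * pi * mu * s) * (exp (- ((w - a * s)\<^sup>2) / (4 * mu * s)) * (- (2 * (w - a * s)) / (4 * mu * s))))
      (at w)"
    by (intro DERIV_cmult DERIV_fun_exp DERIV_cdivide DERIV_minus)
      (auto intro!: derivative_eq_intros)
  have eq: "c * (e * (- (2 * v) / (4 * mu * s))) = - v / (2 * mu * s) * (c * e)" for c e v
    using assms by (simp add: field_simps)
  show ?thesis
    unfolding G0_def by (rule DERIV_cong[OF deriv eq])
qed

lemma abs_G0_le:
  assumes "0 < mu" "0 < s"
  shows "\<bar>G0 a mu (x - y) s\<bar> \<le> gaussian (8 * mu * s) (x - a * s) y / sqrt (4 * pi * mu * s)"
proof -
  have "(y - (x - a * s))\<^sup>2 = (x - y - a * s)\<^sup>2"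
    by algebra
  then have "(y - (x - a * s))\<^sup>2 / (8 * mu * s) \<le> (x - y - a * s)\<^sup>2 / (4 * mu * s)"
    using assms by (simp add: divide_left_mono)
  then have "exp (- ((x - y - a * s)\<^sup>2) / (4 * mu * s)) \<le> gaussian (8 * mu * s) (x - a * s) y"
    by (simp add: gaussian_def)
  then show ?thesis
    using assms by (simp add: G0_def divide_right_mono)
qed

lemma G0_shift_has_derivative_bounded:
  assumes "0 < mu" "0 < s"
  obtains g' where "((\<lambda>x'. G0 a mu (x' - y) s) has_real_derivative g') (at x)"
    and "\<bar>g'\<bar> \<le> gaussian (8 * mu * s) (x - a * s) y / (2 * mu * sqrt pi * s)"
proof
  define v where "v = x - y - a * s"
  have v: "(y - (x - a * s))\<^sup>2 = v\<^sup>2"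
    unfolding v_def by algebra
  have "((\<lambda>x'. G0 a mu (x' - y) s) has_real_derivative - v / (2 * mu * s) * G0 a mu (x - y) s * (1 - 0)) (at x)"
    unfolding v_def
    by (rule DERIV_chain2[OF G0_has_real_derivative[OF assms]]) (intro DERIV_diff DERIV_ident DERIV_const)
  then show "((\<lambda>x'. G0 a mu (x' - y) s) has_real_derivative - v / (2 * mu * s) * G0 a mu (x - y) s) (at x)"
    by simp
  have "\<bar>- v / (2 * mu * s) * G0 a mu (x - y) s\<bar>
      = (\<bar>v\<bar> * exp (- (v\<^sup>2 / (4 * mu * s)))) / (2 * mu * s * sqrt (4 * pi * mu * s))"
    using assms by (simp add: G0_def v_def abs_mult abs_divide)
  also have "\<dots> \<le> (sqrt (4 * mu * s) * exp (- (v\<^sup>2 / (2 * (4 * mu * s))))) / (2 * mu * s * sqrt (4 * pi * mu * s))"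
    using assms by (intro divide_right_mono abs_mult_exp_neg_square_le) auto
  also have "\<dots> = gaussian (8 * mu * s) (x - a * s) y / (2 * mu * sqrt pi * s)"
    using assms unfolding gaussian_def v by (simp add: real_sqrt_mult algebra_simps)
  finally show "\<bar>- v / (2 * mu * s) * G0 a mu (x - y) s\<bar>
      \<le> gaussian (8 * mu * s) (x - a * s) y / (2 * mu * sqrt pi * s)" .
qed

section \<open>Hoelder's inequality against a weight bounded by one\<close>

lemma conjugate_exponents_ereal_cases:
  fixes p q :: ereal
  assumes "1 \<le> p" "1 \<le> q" "1 / p + 1 / q = 1"
  obtains "p = \<infinity>" "q = 1"
    | "p = 1" "q = \<infinity>"
    | p' q' where "p = ereal p'" "q = ereal q'" "1 < p'" "1 < q'" "1 / p' + 1 / q' = 1"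
proof (cases p; cases q)
  fix p' q' assume p: "p = ereal p'" and q: "q = ereal q'"
  then have "1 \<le> p'" "1 \<le> q'" "1 / p' + 1 / q' = 1"
    using assms by (simp_all add: one_ereal_def ereal_divide)
  moreover from this have "1 < p'" "1 < q'"
    by (auto simp: order_le_less)
  ultimately show thesis
    using that(3) p q by blast
next
  fix p' assume "p = ereal p'" "q = \<infinity>"
  then show thesis
    using assms that(2) by (auto simp: one_ereal_def ereal_divide split: if_splits)
next
  fix q' assume "p = \<infinity>" "q = ereal q'"
  then show thesis
    using assms that(1) by (auto simp: one_ereal_def ereal_divide split: if_splits)
qed (use assms in auto)

lemma esssup_abs_nonneg:
  fixes l :: "real \<Rightarrow> real"
  shows "0 \<le> esssup lborel (\<lambda>x. ereal \<bar>l x\<bar>)"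
proof -
  have "esssup lborel (\<lambda>x::real. 0::ereal) \<le> esssup lborel (\<lambda>x. ereal \<bar>l x\<bar>)"
    using esssup_mono[of "\<lambda>x::real. 0::ereal" lborel "\<lambda>x. ereal \<bar>l x\<bar>"] by simp
  then show ?thesis
    by (simp add: esssup_const)
qed

lemma Lq_norm_nonneg: "0 \<le> Lq_norm q l"
  using esssup_abs_nonneg[of l] by (simp add: Lq_norm_def real_of_ereal_pos)

lemma Young_normalized:
  fixes p q K G k L :: real
  assumes "1 < p" "1 < q" "1 / p + 1 / q = 1" "0 < K" "0 < G" "0 \<le> k" "k \<le> 1" "0 \<le> L"
  shows "k * L \<le> K powr (1 / p) * G powr (1 / q) * (k / (p * K) + L powr q / (q * G))"
proof -
  define X where "X = (k / K) powr (1 / p)"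
  define Y where "Y = (k * L powr q / G) powr (1 / q)"
  have XY: "X * Y = k * L / (K powr (1 / p) * G powr (1 / q))"
    using assms
    by (simp add: X_def Y_def powr_divide powr_mult powr_powr mult.assoc
        flip: powr_add[of k "1 / p" "1 / q"])
  have "X * Y \<le> X powr p / p + Y powr q / q"
    by (rule Youngs_inequality) (use assms in \<open>auto simp: X_def Y_def\<close>)
  also have "\<dots> = k / (p * K) + k * L powr q / (q * G)"
    using assms by (simp add: X_def Y_def powr_powr mult.commute)
  also have "\<dots> \<le> k / (p * K) + L powr q / (q * G)"
    using assms by (intro add_left_mono divide_right_mono mult_left_le_one_le) auto
  finally show ?thesis
    using assms unfolding XY by (simp add: divide_le_eq mult.commute)
qed

lemma integrable_weighted_abs:
  fixes k l :: "real \<Rightarrow> real" and p q :: real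
  assumes "1 < p" "1 < q" "1 / p + 1 / q = 1"
    and "integrable lborel k" "\<And>y. 0 \<le> k y" "\<And>y. k y \<le> 1"
    and "l \<in> borel_measurable lborel" "integrable lborel (\<lambda>y. \<bar>l y\<bar> powr q)"
  shows "integrable lborel (\<lambda>y. k y * \<bar>l y\<bar>)"
proof (rule Bochner_Integration.integrable_bound)
  show "integrable lborel (\<lambda>y. k y + \<bar>l y\<bar> powr q)"
    using assms by (intro Bochner_Integration.integrable_add)
  show "(\<lambda>y. k y * \<bar>l y\<bar>) \<in> borel_measurable lborel"
    using borel_measurable_integrable[OF assms(4)] assms(7) by measurable
  have "k y * \<bar>l y\<bar> \<le> k y / p + \<bar>l y\<bar> powr q / q" for y
    using Young_normalized[of p q 1 1 "k y" "\<bar>l y\<bar>"] assms by simp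
  also have "k y / p + \<bar>l y\<bar> powr q / q \<le> k y + \<bar>l y\<bar> powr q" for y
    using divide_left_mono[of 1 p "k y"] divide_left_mono[of 1 q "\<bar>l y\<bar> powr q"] assms
    by (intro add_mono) auto
  finally show "AE y in lborel. norm (k y * \<bar>l y\<bar>) \<le> norm (k y + \<bar>l y\<bar> powr q)"
    using assms by (simp add: abs_mult)
qed

lemma integral_weighted_abs_le_Holder:
  fixes k l :: "real \<Rightarrow> real" and p q :: real
  assumes pq: "1 < p" "1 < q" "1 / p + 1 / q = 1"
    and k: "integrable lborel k" "\<And>y. 0 \<le> k y" "\<And>y. k y \<le> 1" "0 < (\<integral>y. k y \<partial>lborel)"
    and l: "l \<in> borel_measurable lborel" "integrable lborel (\<lambda>y. \<bar>l y\<bar> powr q)"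
  shows "(\<integral>y. k y * \<bar>l y\<bar> \<partial>lborel)
    \<le> (\<integral>y. k y \<partial>lborel) powr (1 / p) * (\<integral>y. \<bar>l y\<bar> powr q \<partial>lborel) powr (1 / q)"
proof -
  define K where "K = (\<integral>y. k y \<partial>lborel)"
  define G where "G = (\<integral>y. \<bar>l y\<bar> powr q \<partial>lborel)"
  have int: "integrable lborel (\<lambda>y. k y * \<bar>l y\<bar>)"
    by (rule integrable_weighted_abs[OF assms(1-3) k(1-3) l])
  show ?thesis
  proof (cases "G = 0")
    case True
    then have "AE y in lborel. \<bar>l y\<bar> powr q = 0"
      using integral_nonneg_eq_0_iff_AE[OF l(2)] by (simp add: G_def)
    then have "AE y in lborel. k y * \<bar>l y\<bar> = 0"
      by eventually_elim simp
    then have "(\<integral>y. k y * \<bar>l y\<bar> \<partial>lborel) = 0"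
      by (simp add: integral_eq_zero_AE)
    then show ?thesis
      using True by (simp add: G_def)
  next
    case False
    then have "0 < G"
      by (simp add: G_def order_le_neq_trans[OF integral_nonneg_AE])
    have "(\<integral>y. k y * \<bar>l y\<bar> \<partial>lborel)
        \<le> (\<integral>y. K powr (1 / p) * G powr (1 / q) * (k y / (p * K) + \<bar>l y\<bar> powr q / (q * G)) \<partial>lborel)"
      using \<open>0 < G\<close> k pq unfolding K_def
      by (intro integral_mono int Young_normalized) (auto intro!: Bochner_Integration.integrable_add l)
    also have "\<dots> = K powr (1 / p) * G powr (1 / q) * (1 / p + 1 / q)"
      using \<open>0 < G\<close> k pq l by (simp add: K_def G_def)
    finally show ?thesis
      using pq by (simp add: K_def G_def)
  qed
qed

lemma integral_weighted_abs_le_L1: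
  fixes k l :: "real \<Rightarrow> real"
  assumes "integrable lborel k" "\<And>y. 0 \<le> k y" "\<And>y. k y \<le> 1" "integrable lborel (\<lambda>y. \<bar>l y\<bar>)"
  shows "integrable lborel (\<lambda>y. k y * \<bar>l y\<bar>)"
    and "(\<integral>y. k y * \<bar>l y\<bar> \<partial>lborel) \<le> (\<integral>y. \<bar>l y\<bar> \<partial>lborel)"
proof -
  have le: "k y * \<bar>l y\<bar> \<le> \<bar>l y\<bar>" for y
    using assms by (intro mult_left_le_one_le) auto
  show int: "integrable lborel (\<lambda>y. k y * \<bar>l y\<bar>)"
    using assms le borel_measurable_integrable[OF assms(1)]
    by (intro Bochner_Integration.integrable_bound[OF assms(4)]) (auto simp: abs_mult)
  show "(\<integral>y. k y * \<bar>l y\<bar> \<partial>lborel) \<le> (\<integral>y. \<bar>l y\<bar> \<partial>lborel)"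
    using int assms(4) le by (rule integral_mono)
qed

lemma integral_weighted_abs_le_Linfinity:
  fixes k l :: "real \<Rightarrow> real"
  assumes "integrable lborel k" "\<And>y. 0 \<le> k y"
    and "l \<in> borel_measurable lborel" "esssup lborel (\<lambda>y. ereal \<bar>l y\<bar>) < \<infinity>"
  shows "integrable lborel (\<lambda>y. k y * \<bar>l y\<bar>)"
    and "(\<integral>y. k y * \<bar>l y\<bar> \<partial>lborel)
      \<le> (\<integral>y. k y \<partial>lborel) * real_of_ereal (esssup lborel (\<lambda>y. ereal \<bar>l y\<bar>))"
proof -
  define S where "S = real_of_ereal (esssup lborel (\<lambda>y. ereal \<bar>l y\<bar>))"
  have "esssup lborel (\<lambda>y. ereal \<bar>l y\<bar>) = ereal S"
    using assms(4) esssup_abs_nonneg[of l] by (cases "esssup lborel (\<lambda>y. ereal \<bar>l y\<bar>)") (auto simp: S_def)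
  moreover have "0 \<le> S"
    by (simp add: S_def real_of_ereal_pos esssup_abs_nonneg)
  ultimately have "AE y in lborel. \<bar>l y\<bar> \<le> S"
    using esssup_AE[of "\<lambda>y. ereal \<bar>l y\<bar>" lborel] by simp
  then have le: "AE y in lborel. k y * \<bar>l y\<bar> \<le> k y * S"
    by eventually_elim (use assms(2) in \<open>auto intro: mult_left_mono\<close>)
  show int: "integrable lborel (\<lambda>y. k y * \<bar>l y\<bar>)"
  proof (rule Bochner_Integration.integrable_bound)
    show "integrable lborel (\<lambda>y. k y * S)"
      using assms(1) by simp
    show "(\<lambda>y. k y * \<bar>l y\<bar>) \<in> borel_measurable lborel"
      using borel_measurable_integrable[OF assms(1)] assms(3) by measurable
    show "AE y in lborel. norm (k y * \<bar>l y\<bar>) \<le> norm (k y * S)"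
      using le by eventually_elim (use assms(2) \<open>0 \<le> S\<close> in \<open>auto simp: abs_mult\<close>)
  qed
  have "(\<integral>y. k y * \<bar>l y\<bar> \<partial>lborel) \<le> (\<integral>y. k y * S \<partial>lborel)"
    using int assms(1) le by (intro integral_mono_AE) auto
  then show "(\<integral>y. k y * \<bar>l y\<bar> \<partial>lborel) \<le> (\<integral>y. k y \<partial>lborel) * S"
    by simp
qed

text \<open>Since \<open>k\<^sup>p \<le> k\<close>, the \<open>L\<^sup>p\<close>-norm of the weight is at most \<open>(\<integral>k)\<^bsup>1/p\<^esup>\<close>.\<close>
lemma integral_weighted_abs_le_Lq_norm:
  fixes k l :: "real \<Rightarrow> real" and p q :: ereal
  assumes pq: "1 \<le> p" "1 \<le> q" "1 / p + 1 / q = 1" and "memLq q l"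
    and k: "integrable lborel k" "\<And>y. 0 \<le> k y" "\<And>y. k y \<le> 1" "0 < (\<integral>y. k y \<partial>lborel)"
  shows "integrable lborel (\<lambda>y. k y * \<bar>l y\<bar>)"
    and "(\<integral>y. k y * \<bar>l y\<bar> \<partial>lborel) \<le> (\<integral>y. k y \<partial>lborel) powr real_of_ereal (1 / p) * Lq_norm q l"
proof -
  have l: "l \<in> borel_measurable lborel"
    using \<open>memLq q l\<close> by (simp add: memLq_def)
  from pq have "integrable lborel (\<lambda>y. k y * \<bar>l y\<bar>) \<and>
    (\<integral>y. k y * \<bar>l y\<bar> \<partial>lborel) \<le> (\<integral>y. k y \<partial>lborel) powr real_of_ereal (1 / p) * Lq_norm q l"
  proof (cases rule: conjugate_exponents_ereal_cases)
    case 1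
    then show ?thesis
      using integral_weighted_abs_le_L1[OF k(1-3)] \<open>memLq q l\<close> k(4)
      by (simp add: memLq_def Lq_norm_def)
  next
    case 2
    then show ?thesis
      using integral_weighted_abs_le_Linfinity[OF k(1,2) l] \<open>memLq q l\<close> k(4)
      by (simp add: memLq_def Lq_norm_def)
  next
    case (3 p' q')
    then show ?thesis
      using integrable_weighted_abs[OF 3(3-5) k(1-3) l] integral_weighted_abs_le_Holder[OF 3(3-5) k l]
        \<open>memLq q l\<close>
      by (simp add: memLq_def Lq_norm_def one_ereal_def ereal_divide)
  qed
  then show "integrable lborel (\<lambda>y. k y * \<bar>l y\<bar>)"
    and "(\<integral>y. k y * \<bar>l y\<bar> \<partial>lborel) \<le> (\<integral>y. k y \<partial>lborel) powr real_of_ereal (1 / p) * Lq_norm q l"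
    by auto
qed

section \<open>The diffusion wave and the operator U\<close>

locale diffusion_wave =
  fixes a b mu M :: real
  assumes mu_pos: "0 < mu" and b_nonzero: "b \<noteq> 0"
begin

definition eta_top :: real where
  "eta_top = exp (b * M / (2 * mu))"

definition wave_denom :: "real \<Rightarrow> real" where
  "wave_denom z = sqrt pi + (eta_top - 1) * gauss_tail (z / sqrt (4 * mu))"

definition similarity_var :: "real \<Rightarrow> real \<Rightarrow> real" where
  "similarity_var x t = (x - a * (1 + t)) / sqrt (1 + t)"

lemma eta_top_pos: "0 < eta_top"
  by (simp add: eta_top_def)

text \<open>The denominator is a convex combination of \<open>sqrt pi\<close> and \<open>eta_top * sqrt pi\<close>.\<close>
lemma wave_denom_bounds:
  "sqrt pi * min 1 eta_top \<le> wave_denom z" "wave_denom z \<le> sqrt pi * max 1 eta_top"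
proof -
  define \<theta> where "\<theta> = gauss_tail (z / sqrt (4 * mu)) / sqrt pi"
  have \<theta>: "0 \<le> \<theta>" "\<theta> \<le> 1"
    using gauss_tail_nonneg gauss_tail_le_sqrt_pi by (auto simp: \<theta>_def)
  have D: "wave_denom z = sqrt pi * ((1 - \<theta>) * 1 + \<theta> * eta_top)"
    by (simp add: wave_denom_def \<theta>_def algebra_simps)
  have "(1 - \<theta>) * min 1 eta_top + \<theta> * min 1 eta_top \<le> (1 - \<theta>) * 1 + \<theta> * eta_top"
    "(1 - \<theta>) * 1 + \<theta> * eta_top \<le> (1 - \<theta>) * max 1 eta_top + \<theta> * max 1 eta_top"
    using \<theta> by (intro add_mono mult_left_mono; simp)+
  then have "min 1 eta_top \<le> (1 - \<theta>) * 1 + \<theta> * eta_top" "(1 - \<theta>) * 1 + \<theta> * eta_top \<le> max 1 eta_top"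
    by (simp_all add: algebra_simps)
  then show "sqrt pi * min 1 eta_top \<le> wave_denom z" "wave_denom z \<le> sqrt pi * max 1 eta_top"
    unfolding D by simp_all
qed

lemma wave_denom_pos: "0 < wave_denom z"
  by (rule less_le_trans[OF _ wave_denom_bounds(1)]) (simp add: eta_top_pos)

lemma wave_denom_has_real_derivative:
  "(wave_denom has_real_derivative
     (1 - eta_top) * exp (- ((z / sqrt (4 * mu))\<^sup>2)) / sqrt (4 * mu)) (at z)"
proof -
  have "((\<lambda>z. gauss_tail (z / sqrt (4 * mu))) has_real_derivative
      - exp (- ((z / sqrt (4 * mu))\<^sup>2)) * (1 / sqrt (4 * mu))) (at z)"
    by (rule DERIV_chain2[OF gauss_tail_has_real_derivative DERIV_cdivide[OF DERIV_ident]])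
  then show ?thesis
    unfolding wave_denom_def using mu_pos by (auto intro!: derivative_eq_intros simp: field_simps)
qed

lemma wave_denom_tendsto_at_bot: "(wave_denom \<longlongrightarrow> eta_top * sqrt pi) at_bot"
proof -
  have "filterlim (\<lambda>z. z / sqrt (4 * mu)) at_bot at_bot"
    using filterlim_affine_at_bot[of "sqrt (4 * mu)" 0] mu_pos by simp
  then have "(wave_denom \<longlongrightarrow> sqrt pi + (eta_top - 1) * sqrt pi) at_bot"
    unfolding wave_denom_def
    by (intro tendsto_intros filterlim_compose[OF gauss_tail_tendsto_at_bot])
  then show ?thesis
    by (simp add: algebra_simps)
qed

lemma chi_star_eq:
  "chi_star b mu M z = sqrt mu / b * ((eta_top - 1) * exp (- ((z / sqrt (4 * mu))\<^sup>2))) / wave_denom z"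
proof -
  have "(z / sqrt (4 * mu))\<^sup>2 = z\<^sup>2 / (4 * mu)"
    using mu_pos by (simp add: power_divide)
  then show ?thesis
    by (simp add: chi_star_def wave_denom_def gauss_tail_def eta_top_def)
qed

lemma chi_star_has_primitive:
  "((\<lambda>z. - (2 * mu / b) * ln (wave_denom z)) has_real_derivative chi_star b mu M z) (at z)"
proof -
  have "2 * mu / sqrt (4 * mu) = sqrt mu"
    using mu_pos by (simp add: real_sqrt_mult real_div_sqrt)
  then have "- (2 * mu / b) * (1 / wave_denom z
        * ((1 - eta_top) * exp (- ((z / sqrt (4 * mu))\<^sup>2)) / sqrt (4 * mu)))
      = chi_star b mu M z"
    unfolding chi_star_eq using mu_pos b_nonzero wave_denom_pos[of z]
    by (simp add: field_simps)
  moreover have "((\<lambda>z. - (2 * mu / b) * ln (wave_denom z)) has_real_derivative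
      - (2 * mu / b) * (1 / wave_denom z
        * ((1 - eta_top) * exp (- ((z / sqrt (4 * mu))\<^sup>2)) / sqrt (4 * mu)))) (at z)"
    by (intro DERIV_cmult DERIV_chain2[OF DERIV_ln_divide[OF wave_denom_pos[of z]]
        wave_denom_has_real_derivative])
  ultimately show ?thesis
    by simp
qed

lemma similarity_var_has_real_derivative:
  "((\<lambda>x. similarity_var x t) has_real_derivative 1 / sqrt (1 + t)) (at x)"
  unfolding similarity_var_def by (intro DERIV_cdivide) (auto intro!: derivative_eq_intros)

lemma eta_eq:
  assumes "-1 < t"
  shows "eta a b mu M x t = eta_top * sqrt pi / wave_denom (similarity_var x t)"
proof -
  define H where "H z = - (2 * mu / b) * ln (wave_denom z)" for z
  have "chi a b mu M y t = chi_star b mu M (similarity_var y t) * (1 / sqrt (1 + t))" for y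
    using assms by (simp add: chi_def similarity_var_def powr_neg_half)
  then have "((\<lambda>y. H (similarity_var y t)) has_real_derivative chi a b mu M y t) (at y)" for y
    unfolding H_def
    by (metis DERIV_chain2[OF chi_star_has_primitive similarity_var_has_real_derivative])
  moreover have "((\<lambda>y. H (similarity_var y t)) \<longlongrightarrow> - (2 * mu / b) * ln (eta_top * sqrt pi)) at_bot"
    unfolding H_def similarity_var_def
    using assms eta_top_pos filterlim_affine_at_bot[of "sqrt (1 + t)" "a * (1 + t)"]
    by (intro tendsto_mult_left tendsto_ln filterlim_compose[OF wave_denom_tendsto_at_bot]) auto
  ultimately have "integral {..x} (\<lambda>y. chi a b mu M y t)
      = H (similarity_var x t) - - (2 * mu / b) * ln (eta_top * sqrt pi)"
    by (intro integral_unique fundamental_theorem_of_calculus_at_bot)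
  then have "eta a b mu M x t = exp (ln (eta_top * sqrt pi) - ln (wave_denom (similarity_var x t)))"
    using mu_pos b_nonzero by (simp add: eta_def H_def field_simps)
  then show ?thesis
    by (simp add: exp_diff eta_top_pos wave_denom_pos)
qed

lemma eta_bounds:
  assumes "-1 < t"
  shows "min 1 eta_top \<le> eta a b mu M x t" "eta a b mu M x t \<le> max 1 eta_top"
proof -
  let ?D = "wave_denom (similarity_var x t)"
  have minmax: "min 1 eta_top * max 1 eta_top = eta_top"
    by (cases "eta_top \<le> 1") auto
  have "min 1 eta_top * ?D \<le> min 1 eta_top * (sqrt pi * max 1 eta_top)"
    "max 1 eta_top * (sqrt pi * min 1 eta_top) \<le> max 1 eta_top * ?D"
    using wave_denom_bounds eta_top_pos by (intro mult_left_mono; simp)+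
  then show "min 1 eta_top \<le> eta a b mu M x t" "eta a b mu M x t \<le> max 1 eta_top"
    unfolding eta_eq[OF assms] using wave_denom_pos minmax
    by (simp_all add: le_divide_eq divide_le_eq algebra_simps)
qed

lemma eta_pos: "-1 < t \<Longrightarrow> 0 < eta a b mu M x t"
  using eta_bounds(1)[of t x] eta_top_pos by linarith

definition eta_slope :: real where
  "eta_slope = eta_top * \<bar>eta_top - 1\<bar> / (2 * sqrt (pi * mu) * (min 1 eta_top)\<^sup>2)"

lemma eta_slope_nonneg: "0 \<le> eta_slope"
  using mu_pos eta_top_pos by (simp add: eta_slope_def)

lemma eta_has_derivative_bounded:
  assumes "-1 < t"
  obtains d where "((\<lambda>x. eta a b mu M x t) has_real_derivative d) (at x)"
    and "\<bar>d\<bar> \<le> eta_slope / sqrt (1 + t)"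
proof -
  define z where "z = similarity_var x t"
  define g where "g = exp (- ((z / sqrt (4 * mu))\<^sup>2))"
  define D' where "D' = (1 - eta_top) * g / sqrt (4 * mu) * (1 / sqrt (1 + t))"
  define d where "d = - (eta_top * sqrt pi) * D' / (wave_denom z)\<^sup>2"
  have "((\<lambda>x. wave_denom (similarity_var x t)) has_real_derivative D') (at x)"
    unfolding D'_def g_def z_def
    by (rule DERIV_chain2[OF wave_denom_has_real_derivative similarity_var_has_real_derivative])
  then have "((\<lambda>x. eta_top * sqrt pi * inverse (wave_denom (similarity_var x t))) has_real_derivative d) (at x)"
    by (rule DERIV_cong[OF DERIV_cmult[OF DERIV_inverse_fun]])
      (simp_all add: d_def z_def wave_denom_pos[THEN less_imp_not_eq2] power2_eq_square divide_inverse)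
  then have "((\<lambda>x. eta a b mu M x t) has_real_derivative d) (at x)"
    using eta_eq[OF assms] by (simp add: divide_inverse)
  moreover have "\<bar>d\<bar> \<le> eta_slope / sqrt (1 + t)"
  proof -
    have "pi * (min 1 eta_top)\<^sup>2 \<le> (wave_denom z)\<^sup>2"
      using power_mono[OF wave_denom_bounds(1)[of z], of 2] eta_top_pos
      by (simp add: power_mult_distrib)
    moreover have "g \<le> 1" "0 < g"
      using mu_pos by (simp_all add: g_def)
    ultimately have "\<bar>d\<bar> \<le> eta_top * sqrt pi * (\<bar>1 - eta_top\<bar> * 1 / sqrt (4 * mu) * (1 / sqrt (1 + t)))
        / (pi * (min 1 eta_top)\<^sup>2)"
      unfolding d_def D'_def using assms mu_pos eta_top_pos
      by (auto simp: abs_mult intro!: frac_le mult_left_mono divide_right_mono mult_left_le)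
    also have "\<dots> = eta_slope / sqrt (1 + t)"
      using assms mu_pos eta_top_pos
      by (simp add: eta_slope_def real_sqrt_mult abs_minus_commute field_simps)
    finally show ?thesis .
  qed
  ultimately show thesis
    using that by blast
qed

lemma deriv_G0_eta_bound:
  assumes "0 < s" "-1 < t"
  shows "\<bar>deriv (\<lambda>x'. G0 a mu (x' - y) s * eta a b mu M x' t) x\<bar>
    \<le> (max 1 eta_top / (2 * mu * sqrt pi * s) + eta_slope / (sqrt (4 * pi * mu * s) * sqrt (1 + t)))
      * gaussian (8 * mu * s) (x - a * s) y"
proof -
  let ?g = "gaussian (8 * mu * s) (x - a * s) y"
  obtain g' where g': "((\<lambda>x'. G0 a mu (x' - y) s) has_real_derivative g') (at x)"
    and g'_le: "\<bar>g'\<bar> \<le> ?g / (2 * mu * sqrt pi * s)"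
    using G0_shift_has_derivative_bounded[OF mu_pos assms(1)] .
  obtain d where d: "((\<lambda>x'. eta a b mu M x' t) has_real_derivative d) (at x)"
    and d_le: "\<bar>d\<bar> \<le> eta_slope / sqrt (1 + t)"
    using eta_has_derivative_bounded[OF assms(2)] .
  have "deriv (\<lambda>x'. G0 a mu (x' - y) s * eta a b mu M x' t) x
      = g' * eta a b mu M x t + G0 a mu (x - y) s * d"
    by (rule DERIV_imp_deriv) (rule DERIV_cong[OF DERIV_mult[OF g' d]], simp)
  also have "\<bar>\<dots>\<bar> \<le> \<bar>g'\<bar> * eta a b mu M x t + \<bar>G0 a mu (x - y) s\<bar> * \<bar>d\<bar>"
    using abs_triangle_ineq[of "g' * eta a b mu M x t" "G0 a mu (x - y) s * d"] eta_pos[OF assms(2), of x]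
    by (simp add: abs_mult)
  also have "\<dots> \<le> ?g / (2 * mu * sqrt pi * s) * max 1 eta_top
      + ?g / sqrt (4 * pi * mu * s) * (eta_slope / sqrt (1 + t))"
    using g'_le d_le abs_G0_le[OF mu_pos assms(1)] eta_bounds(2)[OF assms(2)]
      eta_pos[OF assms(2), THEN less_imp_le] gaussian_pos[THEN less_imp_le] mu_pos assms(1)
    by (intro add_mono mult_mono) auto
  finally show ?thesis
    by (simp add: algebra_simps)
qed

definition U_coeff_heat :: real where
  "U_coeff_heat = max 1 eta_top / (2 * mu * sqrt pi * min 1 eta_top)"

definition U_coeff_eta :: real where
  "U_coeff_eta = eta_slope / (2 * sqrt (pi * mu) * min 1 eta_top)"

lemma U_coeffs_nonneg: "0 \<le> U_coeff_heat" "0 \<le> U_coeff_eta"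
  using mu_pos eta_top_pos eta_slope_nonneg by (simp_all add: U_coeff_heat_def U_coeff_eta_def)

lemma U_op_integrand_le:
  assumes "0 < s" "-1 < t" "-1 < \<tau>"
  shows "\<bar>deriv (\<lambda>x'. G0 a mu (x' - y) s * eta a b mu M x' t) x * inverse (eta a b mu M y \<tau>) * L\<bar>
    \<le> (U_coeff_heat / s + U_coeff_eta / (sqrt (1 + t) * sqrt s)) * (gaussian (8 * mu * s) (x - a * s) y * \<bar>L\<bar>)"
proof -
  let ?g = "gaussian (8 * mu * s) (x - a * s) y"
  have "\<bar>inverse (eta a b mu M y \<tau>)\<bar> \<le> 1 / min 1 eta_top"
    using eta_bounds(1)[OF assms(3), of y] eta_pos[OF assms(3), of y] eta_top_pos
    by (simp add: inverse_eq_divide divide_left_mono)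
  moreover note deriv_G0_eta_bound[OF assms(1,2), of y x]
  moreover note order_trans[OF abs_ge_zero this]
  ultimately have "\<bar>deriv (\<lambda>x'. G0 a mu (x' - y) s * eta a b mu M x' t) x * inverse (eta a b mu M y \<tau>) * L\<bar>
      \<le> (max 1 eta_top / (2 * mu * sqrt pi * s) + eta_slope / (sqrt (4 * pi * mu * s) * sqrt (1 + t))) * ?g
        * (1 / min 1 eta_top) * \<bar>L\<bar>"
    unfolding abs_mult by (intro mult_mono mult_right_mono) auto
  also have "\<dots> = (U_coeff_heat / s + U_coeff_eta / (sqrt (1 + t) * sqrt s)) * (?g * \<bar>L\<bar>)"
    using assms mu_pos eta_top_pos
    by (simp add: U_coeff_heat_def U_coeff_eta_def real_sqrt_mult field_simps)
  finally show ?thesis .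
qed

lemma U_coeffs_decay_le:
  assumes "0 < s" "0 < 1 + t"
  shows "(U_coeff_heat / s + U_coeff_eta / (sqrt (1 + t) * sqrt s)) * s powr (r / 2)
    \<le> (U_coeff_heat + U_coeff_eta)
      * (\<Sum>n\<in>{0::nat, 1}. (1 + t) powr (- 1/2 + real n / 2) * s powr (- 1/2 + r / 2 - real n / 2))"
proof -
  have "c\<^sub>1 * Y + c\<^sub>2 * X \<le> (c\<^sub>1 + c\<^sub>2) * (X + Y)"
    if "0 \<le> c\<^sub>1" "0 \<le> c\<^sub>2" "0 \<le> X" "0 \<le> Y" for c\<^sub>1 c\<^sub>2 X Y :: real
    using that mult_nonneg_nonneg[of c\<^sub>1 X] mult_nonneg_nonneg[of c\<^sub>2 Y] by (simp add: algebra_simps)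
  from this[OF U_coeffs_nonneg, of "s powr (r / 2) * (1 / (sqrt (1 + t) * sqrt s))" "s powr (r / 2) * (1 / s)"]
  show ?thesis
    unfolding decay_rate_sum[OF assms] using assms by (simp add: algebra_simps)
qed

lemma U_op_deriv_bound:
  fixes l :: "real \<Rightarrow> real" and p q :: ereal
  assumes "0 \<le> \<tau>" "\<tau> < t" and pq: "1 \<le> p" "1 \<le> q" "1 / p + 1 / q = 1"
    and l: "\<And>x. l differentiable (at x)" "(l \<longlongrightarrow> 0) at_bot" "memLq q l"
  shows "\<bar>U_op a b mu M (deriv l) x t \<tau>\<bar>
    \<le> (U_coeff_heat + U_coeff_eta) * (8 * pi * mu) powr (real_of_ereal (1 / p) / 2)
      * (\<Sum>n\<in>{0::nat, 1}. (1 + t) powr (- 1/2 + real n / 2)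
          * (t - \<tau>) powr (- 1/2 + real_of_ereal (1 / p) / 2 - real n / 2))
      * Lq_norm q l"
proof -
  define s where "s = t - \<tau>"
  define r where "r = real_of_ereal (1 / p)"
  define g where "g = gaussian (8 * mu * s) (x - a * s)"
  define A where "A = U_coeff_heat / s + U_coeff_eta / (sqrt (1 + t) * sqrt s)"
  have s: "0 < s" "-1 < t" "-1 < \<tau>" "0 < 1 + t"
    using assms by (auto simp: s_def)
  have integrand_le: "\<bar>deriv (\<lambda>x'. G0 a mu (x' - y) s * eta a b mu M x' t) x
      * inverse (eta a b mu M y \<tau>) * integral {..y} (deriv l)\<bar> \<le> A * (g y * \<bar>l y\<bar>)" for y
    using U_op_integrand_le[OF s(1-3)] integral_atMost_deriv[OF l(1,2)] by (simp add: A_def g_def)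
  have g: "integrable lborel g" "\<And>y. 0 \<le> g y" "\<And>y. g y \<le> 1" "(\<integral>y. g y \<partial>lborel) = sqrt (pi * (8 * mu * s))"
    using s mu_pos
    by (auto simp: g_def integrable_gaussian integral_gaussian less_imp_le[OF gaussian_pos] gaussian_le_one)
  have "0 < (\<integral>y. g y \<partial>lborel)"
    unfolding g(4) using s mu_pos by simp
  note Holder = integral_weighted_abs_le_Lq_norm[OF pq l(3) g(1-3) this]
  have A: "0 \<le> A"
    using s U_coeffs_nonneg by (simp add: A_def)
  have "\<bar>U_op a b mu M (deriv l) x t \<tau>\<bar> \<le> (\<integral>y. A * (g y * \<bar>l y\<bar>) \<partial>lborel)"
    unfolding U_op_def s_def[symmetric] using integrand_le Holder(1) A g(2)
    by (intro integral_abs_bound[THEN order_trans] integral_mono') auto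
  also have "\<dots> \<le> A * (sqrt (pi * (8 * mu * s)) powr r * Lq_norm q l)"
    using Holder(2) g(4) A mu_pos s by (simp add: r_def mult_left_mono)
  also have "\<dots> = (8 * pi * mu) powr (r / 2) * (A * s powr (r / 2)) * Lq_norm q l"
    using mu_pos s
    by (simp add: powr_half_sqrt[symmetric] powr_powr powr_mult mult_ac)
  also have "\<dots> \<le> (8 * pi * mu) powr (r / 2) * ((U_coeff_heat + U_coeff_eta)
      * (\<Sum>n\<in>{0::nat, 1}. (1 + t) powr (- 1/2 + real n / 2) * s powr (- 1/2 + r / 2 - real n / 2)))
      * Lq_norm q l"
    unfolding A_def using U_coeffs_decay_le[OF s(1,4)] Lq_norm_nonneg
    by (intro mult_left_mono mult_right_mono) auto
  finally show ?thesis
    by (simp add: r_def s_def mult_ac)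
qed

end

theorem lemma2p7:
  fixes a b mu M :: real and p q :: ereal
  assumes "\<bar>a\<bar> < 1" and "b \<noteq> 0" and "mu = 1 - a\<^sup>2" and "\<bar>M\<bar> \<le> 1"
    and "1 \<le> p" and "1 \<le> q" and "1 / p + 1 / q = 1"
  shows "\<exists>C. \<forall>(lam :: real \<Rightarrow> real \<Rightarrow> real) t \<tau>.
     0 \<le> \<tau> \<and> \<tau> < t
     \<and> (\<forall>x. (\<lambda>\<xi>. lam \<xi> \<tau>) differentiable (at x))
     \<and> continuous_on UNIV (deriv (\<lambda>\<xi>. lam \<xi> \<tau>))
     \<and> ((\<lambda>\<xi>. lam \<xi> \<tau>) \<longlongrightarrow> 0) at_top
     \<and> ((\<lambda>\<xi>. lam \<xi> \<tau>) \<longlongrightarrow> 0) at_bot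
     \<and> memLq q (\<lambda>\<xi>. lam \<xi> \<tau>)
     \<longrightarrow> (\<forall>x. \<bar>U_op a b mu M (deriv (\<lambda>\<xi>. lam \<xi> \<tau>)) x t \<tau>\<bar>
           \<le> C * (\<Sum>n\<in>{0::nat, 1}.
                 (1 + t) powr (- 1/2 + real n / 2)
                 * (t - \<tau>) powr (- 1/2 + real_of_ereal (1 / p) / 2 - real n / 2))
               * Lq_norm q (\<lambda>\<xi>. lam \<xi> \<tau>))"
proof -
  have "0 < mu"
    using assms(1,3) abs_square_less_1[of a] by simp
  then interpret diffusion_wave a b mu M
    using assms(2) by unfold_locales
  show ?thesis
    using U_op_deriv_bound assms(5-7)
    by (intro exI[of _ "(U_coeff_heat + U_coeff_eta) * (8 * pi * mu) powr (real_of_ereal (1 / p) / 2)"]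
        allI impI) blast
qed

end
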